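(* Let $\lambda_1,\lambda_2,\sigma_1,\sigma_2\in\mathbb{C}^*$ and $\eta_1,\eta_2\in\mathbb{C}$ with $\lambda_1\neq\lambda_2$. Suppose that $V$ is a nonzero $\mathcal{G}$-submodule of $\Omega(\lambda_1,\eta_1,\sigma_1,0)\otimes\Omega(\lambda_2,\eta_2,\sigma_2,0)$. Then $1\otimes 1\in V$.
   Context: The planar Galilean conformal algebra $\mathcal{G}$ is the complex Lie algebra with basis $\{L_m,H_m,I_m,J_m\mid m\in\mathbb{Z}\}$ and brackets $[L_m,L_n]=(n-m)L_{m+n}$, $[L_m,H_n]=nH_{m+n}$, $[L_m,I_n]=(n-m)I_{m+n}$, $[L_m,J_n]=(n-m)J_{m+n}$, $[H_m,I_n]=I_{m+n}$, $[H_m,J_n]=-J_{m+n}$, and $[H_m,H_n]=[I_m,I_n]=[J_m,J_n]=[I_m,J_n]=0$ for all $m,n\in\mathbb{Z}$. For $\lambda,\sigma\in\mathbb{C}^*$, $\eta\in\mathbb{C}$, the module $\Omega(\lambda,\eta,\sigma,0)$ is a polynomial algebra $\mathbb{C}[X,Y]$ with $L_m f(X,Y)=\lambda^m(Y-mX+m\eta)f(X,Y-m)$, $H_m f(X,Y)=\lambda^m X f(X,Y-m)$, $I_m f(X,Y)=\lambda^m\sigma f(X-1,Y-m)$, $J_m f(X,Y)=0$. The tensor product of $\mathcal{G}$-modules has action $x(v\otimes w)=xv\otimes w+v\otimes xw$. *)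

theory Defs
  imports Complex_Main
begin

text \<open>Basis elements L_m, H_m, I_m, J_m (m an integer) of the planar Galilean conformal algebra.\<close>
datatype gca_gen = L int | H int | I int | J int

text \<open>Polynomials in C[X,Y] are represented by their polynomial functions C x C -> C
  (faithful since C is infinite).  Action of a basis element on Omega(lam, eta, sig, 0).\<close>
definition omega_act ::
  "complex \<Rightarrow> complex \<Rightarrow> complex \<Rightarrow> gca_gen \<Rightarrow> (complex \<Rightarrow> complex \<Rightarrow> complex) \<Rightarrow> complex \<Rightarrow> complex \<Rightarrow> complex"
  where
  "omega_act lam eta sig g f = (\<lambda>x y. case g of
      L m \<Rightarrow> lam powi m * (y - of_int m * x + of_int m * eta) * f x (y - of_int m)
    | H m \<Rightarrow> lam powi m * x * f x (y - of_int m)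
    | I m \<Rightarrow> lam powi m * sig * f (x - 1) (y - of_int m)
    | J m \<Rightarrow> 0)"

text \<open>The tensor product C[X1,Y1] (x) C[X2,Y2] is identified with C[X1,Y1,X2,Y2], represented by
  polynomial functions in four variables; u (x) v corresponds to (x1,y1,x2,y2) |-> u(x1,y1) v(x2,y2).\<close>
definition poly4 :: "(complex \<Rightarrow> complex \<Rightarrow> complex \<Rightarrow> complex \<Rightarrow> complex) \<Rightarrow> bool" where
  "poly4 F \<longleftrightarrow> (\<exists>S c. finite (S :: (nat \<times> nat \<times> nat \<times> nat) set) \<and>
      F = (\<lambda>x1 y1 x2 y2. \<Sum>(a, b, d, e)\<in>S. c (a, b, d, e) * x1 ^ a * y1 ^ b * x2 ^ d * y2 ^ e))"

definition tensor_act ::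
  "complex \<Rightarrow> complex \<Rightarrow> complex \<Rightarrow> complex \<Rightarrow> complex \<Rightarrow> complex \<Rightarrow> gca_gen
    \<Rightarrow> (complex \<Rightarrow> complex \<Rightarrow> complex \<Rightarrow> complex \<Rightarrow> complex)
    \<Rightarrow> (complex \<Rightarrow> complex \<Rightarrow> complex \<Rightarrow> complex \<Rightarrow> complex)" where
  "tensor_act l1 e1 s1 l2 e2 s2 g F = (\<lambda>x1 y1 x2 y2.
      omega_act l1 e1 s1 g (\<lambda>x y. F x y x2 y2) x1 y1
    + omega_act l2 e2 s2 g (\<lambda>x y. F x1 y1 x y) x2 y2)"

text \<open>A G-submodule of Omega(l1,e1,s1,0) (x) Omega(l2,e2,s2,0): a complex subspace closed under the
  action of all basis elements (hence of all of G).\<close>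
definition is_tensor_submodule ::
  "complex \<Rightarrow> complex \<Rightarrow> complex \<Rightarrow> complex \<Rightarrow> complex \<Rightarrow> complex
    \<Rightarrow> (complex \<Rightarrow> complex \<Rightarrow> complex \<Rightarrow> complex \<Rightarrow> complex) set \<Rightarrow> bool" where
  "is_tensor_submodule l1 e1 s1 l2 e2 s2 V \<longleftrightarrow>
     V \<subseteq> {F. poly4 F} \<and>
     (\<lambda>_ _ _ _. 0) \<in> V \<and>
     (\<forall>F\<in>V. \<forall>G\<in>V. (\<lambda>x1 y1 x2 y2. F x1 y1 x2 y2 + G x1 y1 x2 y2) \<in> V) \<and>
     (\<forall>c. \<forall>F\<in>V. (\<lambda>x1 y1 x2 y2. c * F x1 y1 x2 y2) \<in> V) \<and>
     (\<forall>g. \<forall>F\<in>V. tensor_act l1 e1 s1 l2 e2 s2 g F \<in> V)"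

end

theory Submission
  imports
    Defs
    "HOL-Computational_Algebra.Polynomial_Factorial"
    "HOL-Computational_Algebra.Field_as_Ring"
    "HOL-Library.Function_Algebras"
begin

text \<open>
  Applied to F, I_m gives
  l1^m s1 F(x1 - 1, y1 - m, x2, y2) + l2^m s2 F(x1, y1, x2 - 1, y2 - m); at a fixed point both
  summands are exponential-polynomial sequences in m, with bases l1 and l2 and with degree bounded
  uniformly in the point. A polynomial p with p = 1 mod (X - l1)^N and p = 0 mod (X - l2)^N, which
  exists by Bezout since l1 \<noteq> l2, turns the combination of the I_(j+k) with the coefficients
  of p into an operator keeping the first summand and killing the second. Hence V is closed under
  the translations (x1, y1) -> (x1 - 1, y1 - j), and likewise in (x2, y2). The corresponding
  difference operators commute and are locally nilpotent on polynomials, so some nonzero element of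
  V is killed by all of them. Such a polynomial is invariant under four independent translations,
  hence a nonzero constant, and rescaling it gives 1 (x) 1.
\<close>

section \<open>Polynomials in the shift operator\<close>

text \<open>\<open>shift_op p a\<close> is \<open>p(E) a\<close>, where \<open>(E a) j = a (j + 1)\<close>.\<close>

definition shift_op :: "'a::comm_semiring_1 poly \<Rightarrow> (nat \<Rightarrow> 'a) \<Rightarrow> nat \<Rightarrow> 'a" where
  "shift_op p a j = (\<Sum>k\<le>degree p. coeff p k * a (j + k))"

lemma shift_op_eq_sum:
  assumes "degree p \<le> K"
  shows "shift_op p a j = (\<Sum>k\<le>K. coeff p k * a (j + k))"
  unfolding shift_op_def using assms
  by (intro sum.mono_neutral_left) (auto simp: coeff_eq_0)

lemma shift_op_add: "shift_op (p + q) a j = shift_op p a j + shift_op q a j"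
  using degree_add_le_max[of p q]
  by (simp add: shift_op_eq_sum[of _ "max (degree p) (degree q)"] sum.distrib distrib_right)

lemma shift_op_smult: "shift_op (smult c p) a j = c * shift_op p a j"
  using degree_smult_le[of c p]
  by (simp add: shift_op_eq_sum[of _ "degree p"] sum_distrib_left mult.assoc)

lemma shift_op_pCons: "shift_op (pCons c p) a j = c * a j + shift_op p a (Suc j)"
  using degree_pCons_le[of c p]
  by (simp only: shift_op_eq_sum[of "pCons c p" "Suc (degree p)"] sum.atMost_Suc_shift coeff_pCons_0
      coeff_pCons_Suc) (simp add: shift_op_def)

lemma shift_op_0 [simp]: "shift_op 0 a j = 0"
  by (simp add: shift_op_def)

lemma shift_op_1 [simp]: "shift_op 1 a = a"
  by (simp add: shift_op_def fun_eq_iff)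

lemma shift_op_zero_seq [simp]: "shift_op p (\<lambda>_. 0) = (\<lambda>_. 0)"
  by (simp add: shift_op_def fun_eq_iff)

lemma shift_op_mult: "shift_op (p * q) a = shift_op p (shift_op q a)"
proof (induction p)
  case (pCons c p)
  show ?case
    by (simp add: fun_eq_iff mult_pCons_left shift_op_add shift_op_smult shift_op_pCons pCons.IH)
qed (simp add: fun_eq_iff)

lemma forward_difference_eq_0_or_degree_less:
  fixes f :: "'a::idom poly"
  shows "f \<circ>\<^sub>p [:1, 1:] - f = 0 \<or> degree (f \<circ>\<^sub>p [:1, 1:] - f) < degree f"
proof -
  let ?d = "f \<circ>\<^sub>p [:1, 1:] - f"
  have "degree ?d \<le> degree f"
    using degree_diff_le[of "f \<circ>\<^sub>p [:1, 1:]" "degree f" f] by (simp add: degree_pcompose)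
  moreover have "coeff ?d (degree f) = 0"
  proof (cases "degree f = 0")
    case True
    then show ?thesis by (auto elim: degree_eq_zeroE)
  next
    case False
    then show ?thesis
      using lead_coeff_comp[of "[:1, 1:]" f] by (simp add: degree_pcompose)
  qed
  ultimately show ?thesis
    by (metis leading_coeff_0_iff nless_le)
qed

lemma poly_periodic_imp_const:
  fixes P :: "'a::{idom, ring_char_0} poly"
  assumes "\<And>x. poly P (x + 1) = poly P x"
  shows "poly P x = poly P 0"
proof -
  define Q where "Q = P - [:poly P 0:]"
  have "poly Q (of_nat m) = 0" for m
  proof (induction m)
    case (Suc m)
    then show ?case
      using assms[of "of_nat m"] by (simp add: Q_def add.commute)
  qed (simp add: Q_def)
  then have "range of_nat \<subseteq> {x. poly Q x = 0}"
    by auto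
  moreover have "infinite (range (of_nat :: nat \<Rightarrow> 'a))"
    by (rule range_inj_infinite) (rule inj_of_nat)
  ultimately have "Q = 0"
    using poly_roots_finite finite_subset by blast
  then have "poly Q x = 0"
    by simp
  then show ?thesis
    by (simp add: Q_def)
qed

lemma shift_op_linear_power_annihilates:
  fixes c :: "'a::{idom, ring_char_0}"
  assumes "degree f < N"
  shows "shift_op ([:-c, 1:] ^ N) (\<lambda>m. c ^ m * poly f (of_nat m)) = (\<lambda>_. 0)"
  using assms
proof (induction N arbitrary: f)
  case (Suc N)
  define g where "g = smult c (f \<circ>\<^sub>p [:1, 1:] - f)"
  have step: "shift_op [:-c, 1:] (\<lambda>m. c ^ m * poly f (of_nat m)) = (\<lambda>m. c ^ m * poly g (of_nat m))"
    by (simp add: fun_eq_iff shift_op_pCons g_def poly_pcompose algebra_simps)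
  have "g = 0 \<or> degree g < N"
    using forward_difference_eq_0_or_degree_less[of f] Suc.prems
      degree_smult_le[of c "f \<circ>\<^sub>p [:1, 1:] - f"]
    by (auto simp: g_def)
  then have "shift_op ([:-c, 1:] ^ N) (\<lambda>m. c ^ m * poly g (of_nat m)) = (\<lambda>_. 0)"
    using Suc.IH by auto
  then show ?case
    by (simp only: power_Suc2 shift_op_mult step)
qed simp

lemma coprime_linear_powers:
  fixes c d :: "'a::field_gcd"
  assumes "c \<noteq> d"
  shows "coprime ([:-c, 1:] ^ N) ([:-d, 1:] ^ N)"
proof -
  have "coprime [:-c, 1:] [:-d, 1:]"
  proof (rule coprimeI)
    fix r assume "r dvd [:-c, 1:]" "r dvd [:-d, 1:]"
    then have "r dvd [:-c, 1:] - [:-d, 1:]" by (rule dvd_diff)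
    moreover have "is_unit ([:-c, 1:] - [:-d, 1:])"
      using assms by (simp add: is_unit_const_poly_iff dvd_field_iff)
    ultimately show "is_unit r" by (rule dvd_unit_imp_unit)
  qed
  then show ?thesis by simp
qed

definition exp_poly_seq :: "'a::comm_semiring_1 \<Rightarrow> nat \<Rightarrow> (nat \<Rightarrow> 'a) \<Rightarrow> bool" where
  "exp_poly_seq c N a \<longleftrightarrow> (\<exists>f. degree f < N \<and> a = (\<lambda>m. c ^ m * poly f (of_nat m)))"

lemma shift_op_separating:
  fixes c d :: "'a::{field_gcd, ring_char_0}"
  assumes "c \<noteq> d"
  obtains p where "\<And>a. exp_poly_seq c N a \<Longrightarrow> shift_op p a = a"
    and "\<And>b. exp_poly_seq d N b \<Longrightarrow> shift_op p b = (\<lambda>_. 0)"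
proof -
  obtain u v where uv: "bezout_coefficients ([:-c, 1:] ^ N) ([:-d, 1:] ^ N) = (u, v)"
    by (cases "bezout_coefficients ([:-c, 1:] ^ N) ([:-d, 1:] ^ N)")
  have bezout: "u * [:-c, 1:] ^ N + v * [:-d, 1:] ^ N = 1"
    using bezout_coefficients[OF uv] coprime_imp_gcd_eq_1[OF coprime_linear_powers[OF assms]]
    by simp
  show ?thesis
  proof
    fix a assume "exp_poly_seq c N a"
    then obtain f where f: "degree f < N" "a = (\<lambda>m. c ^ m * poly f (of_nat m))"
      unfolding exp_poly_seq_def by blast
    have "a = shift_op (u * [:-c, 1:] ^ N + v * [:-d, 1:] ^ N) a"
      by (simp add: bezout)
    also have "\<dots> = shift_op (v * [:-d, 1:] ^ N) a"
      by (simp add: fun_eq_iff shift_op_add shift_op_mult f shift_op_linear_power_annihilates)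
    finally show "shift_op (v * [:-d, 1:] ^ N) a = a" ..
  next
    fix b assume "exp_poly_seq d N b"
    then show "shift_op (v * [:-d, 1:] ^ N) b = (\<lambda>_. 0)"
      unfolding exp_poly_seq_def by (auto simp: shift_op_mult shift_op_linear_power_annihilates)
  qed
qed

section \<open>Commuting locally nilpotent operators\<close>

lemma ex_nonzero_common_kernel:
  fixes Ds :: "('a::zero \<Rightarrow> 'a) list"
  assumes "\<And>D x. D \<in> set Ds \<Longrightarrow> x \<in> V \<Longrightarrow> D x \<in> V"
    and "\<And>D. D \<in> set Ds \<Longrightarrow> D 0 = 0"
    and "\<And>D D' x. D \<in> set Ds \<Longrightarrow> D' \<in> set Ds \<Longrightarrow> D (D' x) = D' (D x)"
    and "\<And>D x. D \<in> set Ds \<Longrightarrow> x \<in> V \<Longrightarrow> \<exists>k. (D ^^ k) x = 0"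
    and "x \<in> V" "x \<noteq> 0"
  shows "\<exists>y\<in>V. y \<noteq> 0 \<and> (\<forall>D\<in>set Ds. D y = 0)"
  using assms
proof (induction Ds)
  case Nil
  then show ?case by auto
next
  case (Cons D Ds)
  note closed = Cons.prems(1) and zero = Cons.prems(2) and commute = Cons.prems(3)
  have "\<exists>y\<in>V. y \<noteq> 0 \<and> (\<forall>D'\<in>set Ds. D' y = 0)"
    by (rule Cons.IH) (simp_all add: Cons.prems)
  then obtain y where y: "y \<in> V" "y \<noteq> 0" "\<And>D'. D' \<in> set Ds \<Longrightarrow> D' y = 0"
    by blast
  obtain k where "(D ^^ k) y = 0"
    using Cons.prems(4)[of D y] y(1) by auto
  then obtain i where i: "(D ^^ i) y \<noteq> 0" "D ((D ^^ i) y) = 0"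
    using ex_least_nat_less[of "\<lambda>k. (D ^^ k) y = 0" k] y(2) by auto
  have in_V: "(D ^^ j) y \<in> V" for j
    by (induction j) (simp_all add: y(1) closed)
  have "D' ((D ^^ j) y) = 0" if "D' \<in> set Ds" for D' j
  proof (induction j)
    case 0
    then show ?case using y(3) that by simp
  next
    case (Suc j)
    have "D' ((D ^^ Suc j) y) = D (D' ((D ^^ j) y))"
      using commute[of D' D] that by simp
    then show ?case
      using Suc.IH zero by simp
  qed
  then show ?case
    using in_V i by auto
qed

section \<open>Functions of four variables along lines\<close>

type_synonym fun4 = "complex \<Rightarrow> complex \<Rightarrow> complex \<Rightarrow> complex \<Rightarrow> complex"

definition diff4 :: "complex \<Rightarrow> complex \<Rightarrow> complex \<Rightarrow> complex \<Rightarrow> fun4 \<Rightarrow> fun4" where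
  "diff4 a1 b1 a2 b2 G =
    (\<lambda>x1 y1 x2 y2. G (x1 - a1) (y1 - b1) (x2 - a2) (y2 - b2) - G x1 y1 x2 y2)"

definition poly_along :: "complex \<Rightarrow> complex \<Rightarrow> complex \<Rightarrow> complex \<Rightarrow> nat \<Rightarrow> fun4 \<Rightarrow> bool" where
  "poly_along a1 b1 a2 b2 n G \<longleftrightarrow> (\<forall>x1 y1 x2 y2. \<exists>P. degree P \<le> n \<and>
     (\<forall>t. G (x1 - t * a1) (y1 - t * b1) (x2 - t * a2) (y2 - t * b2) = poly P t))"

lemma diff4_commute:
  "diff4 a1 b1 a2 b2 (diff4 c1 d1 c2 d2 G) = diff4 c1 d1 c2 d2 (diff4 a1 b1 a2 b2 G)"
  by (intro ext) (simp add: diff4_def algebra_simps)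

lemma diff4_zero: "diff4 a1 b1 a2 b2 0 = 0"
  by (simp add: diff4_def zero_fun_def)

lemma diff4_along_line:
  assumes "\<And>t. G (x1 - t * a1) (y1 - t * b1) (x2 - t * a2) (y2 - t * b2) = poly P t"
  shows "diff4 a1 b1 a2 b2 G (x1 - t * a1) (y1 - t * b1) (x2 - t * a2) (y2 - t * b2)
    = poly (P \<circ>\<^sub>p [:1, 1:] - P) t"
  using assms[of "t + 1"] assms[of t]
  by (simp add: diff4_def poly_pcompose algebra_simps)

lemma poly_along_diff4:
  assumes "poly_along a1 b1 a2 b2 (Suc n) G"
  shows "poly_along a1 b1 a2 b2 n (diff4 a1 b1 a2 b2 G)"
  unfolding poly_along_def
proof (intro allI)
  fix x1 y1 x2 y2
  obtain P where P: "degree P \<le> Suc n"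
    "\<And>t. G (x1 - t * a1) (y1 - t * b1) (x2 - t * a2) (y2 - t * b2) = poly P t"
    using assms unfolding poly_along_def by blast
  have "degree (P \<circ>\<^sub>p [:1, 1:] - P) \<le> n"
    using forward_difference_eq_0_or_degree_less[of P] P(1) by auto
  then show "\<exists>Q. degree Q \<le> n \<and> (\<forall>t. diff4 a1 b1 a2 b2 G
      (x1 - t * a1) (y1 - t * b1) (x2 - t * a2) (y2 - t * b2) = poly Q t)"
    using diff4_along_line[of G x1 a1 y1 b1 x2 a2 y2 b2 P, OF P(2)] by blast
qed

lemma poly_along_0_diff4:
  assumes "poly_along a1 b1 a2 b2 0 G"
  shows "diff4 a1 b1 a2 b2 G = 0"
proof (intro ext)
  fix x1 y1 x2 y2
  obtain P where P: "degree P = 0"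
    "\<And>t. G (x1 - t * a1) (y1 - t * b1) (x2 - t * a2) (y2 - t * b2) = poly P t"
    using assms unfolding poly_along_def by blast
  have "P \<circ>\<^sub>p [:1, 1:] - P = 0"
    using forward_difference_eq_0_or_degree_less[of P] P(1) by auto
  then show "diff4 a1 b1 a2 b2 G x1 y1 x2 y2 = 0 x1 y1 x2 y2"
    using diff4_along_line[of G x1 a1 y1 b1 x2 a2 y2 b2 P 0, OF P(2)] by simp
qed

lemma poly_along_diff4_nilpotent:
  "poly_along a1 b1 a2 b2 n G \<Longrightarrow> (diff4 a1 b1 a2 b2 ^^ Suc n) G = 0"
proof (induction n arbitrary: G)
  case 0
  then show ?case by (simp add: poly_along_0_diff4)
next
  case (Suc n)
  then show ?case
    by (simp only: funpow_Suc_right comp_def poly_along_diff4)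
qed

lemma poly_along_diff4_eq_0_imp_invariant:
  assumes "poly_along a1 b1 a2 b2 n G" and "diff4 a1 b1 a2 b2 G = 0"
  shows "G (x1 - t * a1) (y1 - t * b1) (x2 - t * a2) (y2 - t * b2) = G x1 y1 x2 y2"
proof -
  obtain P where P: "\<And>t. G (x1 - t * a1) (y1 - t * b1) (x2 - t * a2) (y2 - t * b2) = poly P t"
    using assms(1) unfolding poly_along_def by blast
  have "poly P (s + 1) = poly P s" for s
    using diff4_along_line[of G x1 a1 y1 b1 x2 a2 y2 b2 P s, OF P] assms(2)
    by (simp add: poly_pcompose add.commute)
  then have "poly P t = poly P 0"
    by (rule poly_periodic_imp_const)
  then show ?thesis
    using P[of t] P[of 0] by simp
qed

lemma poly_along_exp_poly_seq:
  assumes "poly_along a1 b1 a2 b2 n G" and "n < N"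
  shows "exp_poly_seq c N
    (\<lambda>m. c ^ m * G (x1 - of_nat m * a1) (y1 - of_nat m * b1)
      (x2 - of_nat m * a2) (y2 - of_nat m * b2))"
proof -
  obtain P where "degree P \<le> n"
    "\<And>t. G (x1 - t * a1) (y1 - t * b1) (x2 - t * a2) (y2 - t * b2) = poly P t"
    using assms(1) unfolding poly_along_def by blast
  then show ?thesis
    unfolding exp_poly_seq_def using assms(2) by (intro exI[of _ P]) auto
qed

lemma degree_linear_powers_le:
  fixes x1 y1 x2 y2 x3 y3 x4 y4 :: "'a::comm_semiring_1"
  shows "degree ([:x1, y1:] ^ a * [:x2, y2:] ^ b * [:x3, y3:] ^ d * [:x4, y4:] ^ e) \<le> a + b + d + e"
proof -
  have linear_power: "degree ([:x, y:] ^ k) \<le> k" for x y :: 'a and k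
    using degree_power_le[of "[:x, y:]" k] by (simp add: order_trans)
  have mult_le: "degree (p * q) \<le> k + l"
    if "degree p \<le> k" "degree q \<le> l" for p q :: "'a poly" and k l
    using degree_mult_le[of p q] that by linarith
  show ?thesis
    by (intro mult_le linear_power)
qed

lemma poly4_poly_along:
  assumes "poly4 F"
  obtains n where "poly_along a1 b1 a2 b2 n F"
proof -
  obtain S c where S: "finite (S :: (nat \<times> nat \<times> nat \<times> nat) set)"
    and F: "F = (\<lambda>x1 y1 x2 y2.
      \<Sum>(a, b, d, e)\<in>S. c (a, b, d, e) * x1 ^ a * y1 ^ b * x2 ^ d * y2 ^ e)"
    using assms unfolding poly4_def by blast
  define n where "n = (\<Sum>(a, b, d, e)\<in>S. a + b + d + e)"
  have "poly_along a1 b1 a2 b2 n F"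
    unfolding poly_along_def
  proof (intro allI)
    fix x1 y1 x2 y2
    define P where "P = (\<Sum>(a, b, d, e)\<in>S. smult (c (a, b, d, e))
      ([:x1, -a1:] ^ a * [:y1, -b1:] ^ b * [:x2, -a2:] ^ d * [:y2, -b2:] ^ e))"
    have "degree P \<le> n"
      unfolding P_def
    proof (rule degree_sum_le[OF S], clarify)
      fix a b d e assume "(a, b, d, e) \<in> S"
      then have "a + b + d + e \<le> n"
        unfolding n_def
        using member_le_sum[OF _ _ S, of "(a, b, d, e)" "\<lambda>(a, b, d, e). a + b + d + e"]
        by simp
      then show "degree (smult (c (a, b, d, e))
          ([:x1, -a1:] ^ a * [:y1, -b1:] ^ b * [:x2, -a2:] ^ d * [:y2, -b2:] ^ e)) \<le> n"
        using degree_linear_powers_le by (meson degree_smult_le order_trans)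
    qed
    moreover have "F (x1 - t * a1) (y1 - t * b1) (x2 - t * a2) (y2 - t * b2) = poly P t" for t
      unfolding F P_def poly_sum
      by (intro sum.cong) (auto simp: poly_mult poly_power mult.assoc)
    ultimately show "\<exists>P. degree P \<le> n \<and>
        (\<forall>t. F (x1 - t * a1) (y1 - t * b1) (x2 - t * a2) (y2 - t * b2) = poly P t)"
      by blast
  qed
  then show ?thesis
    using that by blast
qed

lemma poly4_diff4_nilpotent:
  assumes "poly4 F"
  shows "\<exists>k. (diff4 a1 b1 a2 b2 ^^ k) F = 0"
proof -
  obtain n where "poly_along a1 b1 a2 b2 n F"
    using poly4_poly_along[OF assms] .
  then show ?thesis
    using poly_along_diff4_nilpotent by blast
qed

lemma poly4_constant_if_diff4_eq_0:
  assumes "poly4 G"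
    and "diff4 1 0 0 0 G = 0" "diff4 1 1 0 0 G = 0" "diff4 0 0 1 0 G = 0" "diff4 0 0 1 1 G = 0"
  shows "G = (\<lambda>_ _ _ _. G 0 0 0 0)"
proof (intro ext)
  fix x1 y1 x2 y2
  obtain n1 where n1: "poly_along 1 0 0 0 n1 G" using poly4_poly_along[OF assms(1)] .
  obtain n2 where n2: "poly_along 1 1 0 0 n2 G" using poly4_poly_along[OF assms(1)] .
  obtain n3 where n3: "poly_along 0 0 1 0 n3 G" using poly4_poly_along[OF assms(1)] .
  obtain n4 where n4: "poly_along 0 0 1 1 n4 G" using poly4_poly_along[OF assms(1)] .
  note invariant = poly_along_diff4_eq_0_imp_invariant[OF n1 assms(2)]
    poly_along_diff4_eq_0_imp_invariant[OF n2 assms(3)]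
    poly_along_diff4_eq_0_imp_invariant[OF n3 assms(4)]
    poly_along_diff4_eq_0_imp_invariant[OF n4 assms(5)]
  have "G x1 y1 x2 y2 = G y1 y1 x2 y2"
    using invariant(1)[of x1 "x1 - y1" y1 x2 y2] by simp
  also have "\<dots> = G 0 0 x2 y2"
    using invariant(2)[of y1 y1 y1 x2 y2] by simp
  also have "\<dots> = G 0 0 y2 y2"
    using invariant(3)[of 0 "x2 - y2" 0 x2 y2] by simp
  also have "\<dots> = G 0 0 0 0"
    using invariant(4)[of 0 y2 0 y2 y2] by simp
  finally show "G x1 y1 x2 y2 = G 0 0 0 0" .
qed

section \<open>Submodules of the tensor product\<close>

context
  fixes l1 e1 s1 l2 e2 s2 :: complex and V :: "fun4 set"
  assumes submodule: "is_tensor_submodule l1 e1 s1 l2 e2 s2 V"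
begin

lemma submodule_zero: "(\<lambda>_ _ _ _. 0) \<in> V"
  using submodule unfolding is_tensor_submodule_def by blast

lemma submodule_add: "F \<in> V \<Longrightarrow> G \<in> V \<Longrightarrow> (\<lambda>x1 y1 x2 y2. F x1 y1 x2 y2 + G x1 y1 x2 y2) \<in> V"
  using submodule unfolding is_tensor_submodule_def by blast

lemma submodule_scale: "F \<in> V \<Longrightarrow> (\<lambda>x1 y1 x2 y2. c * F x1 y1 x2 y2) \<in> V"
  using submodule unfolding is_tensor_submodule_def by blast

lemma submodule_poly4: "F \<in> V \<Longrightarrow> poly4 F"
  using submodule unfolding is_tensor_submodule_def by blast

lemma submodule_scale_cancel:
  assumes "(\<lambda>x1 y1 x2 y2. c * F x1 y1 x2 y2) \<in> V" and "c \<noteq> 0"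
  shows "F \<in> V"
proof -
  have "(\<lambda>x1 y1 x2 y2. inverse c * (c * F x1 y1 x2 y2)) = F"
    using assms(2) by (simp add: fun_eq_iff)
  then show ?thesis
    using submodule_scale[OF assms(1), of "inverse c"] by simp
qed

lemma submodule_sum:
  "finite A \<Longrightarrow> (\<And>i. i \<in> A \<Longrightarrow> F i \<in> V) \<Longrightarrow>
    (\<lambda>x1 y1 x2 y2. \<Sum>i\<in>A. c i * F i x1 y1 x2 y2) \<in> V"
proof (induction A rule: finite_induct)
  case empty
  then show ?case using submodule_zero by simp
next
  case (insert i A)
  then show ?case
    using submodule_add[OF submodule_scale[of "F i" "c i"]] by simp
qed

lemma submodule_I:
  assumes "F \<in> V"
  shows "(\<lambda>x1 y1 x2 y2. l1 ^ m * s1 * F (x1 - 1) (y1 - of_nat m) x2 y2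
    + l2 ^ m * s2 * F x1 y1 (x2 - 1) (y2 - of_nat m)) \<in> V"
  using submodule assms unfolding is_tensor_submodule_def
  by (auto dest!: spec[of _ "I (int m)"] simp: tensor_act_def omega_act_def power_int_of_nat)

lemma submodule_shift_op_I:
  assumes "F \<in> V"
  shows "(\<lambda>x1 y1 x2 y2. s1 * shift_op p (\<lambda>m. l1 ^ m * F (x1 - 1) (y1 - of_nat m) x2 y2) j
    + s2 * shift_op p (\<lambda>m. l2 ^ m * F x1 y1 (x2 - 1) (y2 - of_nat m)) j) \<in> V"
proof -
  have "(\<lambda>x1 y1 x2 y2. \<Sum>k\<le>degree p. coeff p k * (\<lambda>x1 y1 x2 y2.
      l1 ^ (j + k) * s1 * F (x1 - 1) (y1 - of_nat (j + k)) x2 y2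
      + l2 ^ (j + k) * s2 * F x1 y1 (x2 - 1) (y2 - of_nat (j + k))) x1 y1 x2 y2) \<in> V"
    by (intro submodule_sum finite_atMost submodule_I assms)
  then show ?thesis
    by (simp add: shift_op_def sum_distrib_left sum.distrib algebra_simps)
qed

lemma submodule_diff4:
  assumes "F \<in> V" and "(\<lambda>x1 y1 x2 y2. F (x1 - a1) (y1 - b1) (x2 - a2) (y2 - b2)) \<in> V"
  shows "diff4 a1 b1 a2 b2 F \<in> V"
  using submodule_add[OF assms(2) submodule_scale[OF assms(1), of "-1"]]
  by (simp add: diff4_def)

lemma submodule_translate:
  assumes "l1 \<noteq> 0" "l2 \<noteq> 0" "s1 \<noteq> 0" "s2 \<noteq> 0" "l1 \<noteq> l2" and "F \<in> V"
  shows "(\<lambda>x1 y1 x2 y2. F (x1 - 1) (y1 - of_nat j) x2 y2) \<in> V"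
    and "(\<lambda>x1 y1 x2 y2. F x1 y1 (x2 - 1) (y2 - of_nat j)) \<in> V"
proof -
  obtain n1 where n1: "poly_along 0 1 0 0 n1 F"
    using poly4_poly_along[OF submodule_poly4[OF assms(6)]] .
  obtain n2 where n2: "poly_along 0 0 0 1 n2 F"
    using poly4_poly_along[OF submodule_poly4[OF assms(6)]] .
  define N where "N = Suc (max n1 n2)"
  have seq1: "exp_poly_seq c N (\<lambda>m. c ^ m * F (x1 - 1) (y1 - of_nat m) x2 y2)" for c x1 y1 x2 y2
    using poly_along_exp_poly_seq[OF n1, of N c "x1 - 1" y1 x2 y2] by (simp add: N_def)
  have seq2: "exp_poly_seq c N (\<lambda>m. c ^ m * F x1 y1 (x2 - 1) (y2 - of_nat m))" for c x1 y1 x2 y2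
    using poly_along_exp_poly_seq[OF n2, of N c x1 y1 "x2 - 1" y2] by (simp add: N_def)
  obtain p where p: "\<And>a. exp_poly_seq l1 N a \<Longrightarrow> shift_op p a = a"
    "\<And>b. exp_poly_seq l2 N b \<Longrightarrow> shift_op p b = (\<lambda>_. 0)"
    using shift_op_separating[OF assms(5)] by blast
  have "(\<lambda>x1 y1 x2 y2. (s1 * l1 ^ j) * F (x1 - 1) (y1 - of_nat j) x2 y2) \<in> V"
    using submodule_shift_op_I[OF assms(6), of p j] by (simp add: p seq1 seq2 mult.assoc)
  then show "(\<lambda>x1 y1 x2 y2. F (x1 - 1) (y1 - of_nat j) x2 y2) \<in> V"
    by (rule submodule_scale_cancel) (simp add: assms)
  obtain q where q: "\<And>a. exp_poly_seq l2 N a \<Longrightarrow> shift_op q a = a"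
    "\<And>b. exp_poly_seq l1 N b \<Longrightarrow> shift_op q b = (\<lambda>_. 0)"
    using shift_op_separating[OF assms(5)[symmetric]] by blast
  have "(\<lambda>x1 y1 x2 y2. (s2 * l2 ^ j) * F x1 y1 (x2 - 1) (y2 - of_nat j)) \<in> V"
    using submodule_shift_op_I[OF assms(6), of q j] by (simp add: q seq1 seq2 mult.assoc)
  then show "(\<lambda>x1 y1 x2 y2. F x1 y1 (x2 - 1) (y2 - of_nat j)) \<in> V"
    by (rule submodule_scale_cancel) (simp add: assms)
qed

lemma submodule_ex_translation_invariant:
  assumes "l1 \<noteq> 0" "l2 \<noteq> 0" "s1 \<noteq> 0" "s2 \<noteq> 0" "l1 \<noteq> l2" and "F \<in> V" "F \<noteq> 0"
  obtains G where "G \<in> V" "G \<noteq> 0"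
    "diff4 1 0 0 0 G = 0" "diff4 1 1 0 0 G = 0" "diff4 0 0 1 0 G = 0" "diff4 0 0 1 1 G = 0"
proof -
  let ?Ds = "[diff4 1 0 0 0, diff4 1 1 0 0, diff4 0 0 1 0, diff4 0 0 1 1]"
  have closed: "D H \<in> V" if "D \<in> set ?Ds" "H \<in> V" for D H
    using that submodule_translate[OF assms(1-5) \<open>H \<in> V\<close>, of 0]
      submodule_translate[OF assms(1-5) \<open>H \<in> V\<close>, of 1]
    by (auto intro: submodule_diff4)
  have nilpotent: "\<exists>k. (D ^^ k) H = 0" if "D \<in> set ?Ds" "H \<in> V" for D H
    using that poly4_diff4_nilpotent[OF submodule_poly4] by auto
  have "\<exists>G\<in>V. G \<noteq> 0 \<and> (\<forall>D\<in>set ?Ds. D G = 0)"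
    by (rule ex_nonzero_common_kernel[of ?Ds V F])
      (use closed nilpotent assms(6,7) in \<open>auto simp: diff4_zero diff4_commute\<close>)
  then show ?thesis
    using that by auto
qed

end

theorem proposition4p2:
  fixes l1 l2 s1 s2 e1 e2 :: complex
    and V :: "(complex \<Rightarrow> complex \<Rightarrow> complex \<Rightarrow> complex \<Rightarrow> complex) set"
  assumes "l1 \<noteq> 0" and "l2 \<noteq> 0" and "s1 \<noteq> 0" and "s2 \<noteq> 0"
    and "l1 \<noteq> l2"
    and "is_tensor_submodule l1 e1 s1 l2 e2 s2 V"
    and "V \<noteq> {\<lambda>_ _ _ _. 0}"
  shows "(\<lambda>_ _ _ _. 1) \<in> V"
proof -
  note submodule = assms(6)
  obtain F where "F \<in> V" "F \<noteq> 0"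
    using assms(7) submodule_zero[OF submodule] by (auto simp: zero_fun_def)
  then obtain G where G: "G \<in> V" "G \<noteq> 0"
    "diff4 1 0 0 0 G = 0" "diff4 1 1 0 0 G = 0" "diff4 0 0 1 0 G = 0" "diff4 0 0 1 1 G = 0"
    by (rule submodule_ex_translation_invariant[OF submodule assms(1-5)])
  then have G_const: "G = (\<lambda>_ _ _ _. G 0 0 0 0)"
    using poly4_constant_if_diff4_eq_0 submodule_poly4[OF submodule] by blast
  with G(2) have "G 0 0 0 0 \<noteq> 0"
    by (auto simp: zero_fun_def)
  moreover have "(\<lambda>x1 y1 x2 y2. G 0 0 0 0 * 1) \<in> V"
    using G(1) G_const by simp
  ultimately show ?thesis
    by (rule submodule_scale_cancel[OF submodule, rotated])
qed

end
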